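(* Let $(\mathcal{V},\mathcal{E})$ be a finite connected undirected graph that is a tree (each edge usable in both directions, so $(i,j)\in\mathcal{E}$ iff $(j,i)\in\mathcal{E}$), and for $i\in\mathcal{V}$ let $\mathrm{ne}(i)$ be the set of neighbours of $i$ (excluding $i$). Let $\{F^{v}\}_{v\in\mathcal{V}}$ be $d\times d$ matrices. For every ordered edge $(i,j)\in\mathcal{E}$ let $\theta^{i,j}\in\mathbb{R}^{d}$ be given, set $\theta^{i,i}=0$ for all $i$, and for arbitrary nodes $i,j$ joined by the unique tree path $i=j_0,j_1,\dots,j_{m+1}=j$ define $\theta^{i,j}=\theta^{j_0,j_1}+\theta^{j_1,j_2}+\dots+\theta^{j_m,j_{m+1}}$. Define messages for every ordered edge $(i,j)\in\mathcal{E}$ by $m_{1}^{i,j}=F^{i}$, $\ddot m_{1}^{i,j}=F^{i}\theta^{j,i}$, and for $k=2,\dots,K$: $$m_{k}^{i,j}=F^{i}+\sum_{p\in\mathrm{ne}(i)\setminus\{j\}}m_{k-1}^{p,i},\qquad \ddot m_{k}^{i,j}=m_{k}^{i,j}\theta^{j,i}+\sum_{p\in\mathrm{ne}(i)\setminus\{j\}}\ddot m_{k-1}^{p,i}.$$ If $K$ is at least the number of edges on the path between the two farthest nodes of the network (the diameter of the tree), then for every node $r\in\mathcal{V}$, $$\sum_{v\in\mathcal{V}}F^{v}=F^{r}+\sum_{j\in\mathrm{ne}(r)}m_{K}^{j,r}\qquad\text{and}\qquad \sum_{v\in\mathcal{V}}F^{v}\theta^{r,v}=\sum_{j\in\mathrm{ne}(r)}\ddot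 m_{K}^{j,r}.$$
   Context: This is the message-passing scheme of a sensor network at a fixed time $n$ (the time index is suppressed): $\theta^{i,j}$ plays the role of the (estimated) position of node $i$ in the local coordinate system of node $j$, and the additivity of $\theta$ along paths is the relation $\theta^{i,j}=\theta^{i,j_1}+\theta^{j_1,j_2}+\dots+\theta^{j_m,j}$ for nodes connected through intermediate nodes $j_1,\dots,j_m$. The message $m_k^{i,j}$, $\ddot m_k^{i,j}$ is the one sent from node $i$ to node $j$ at iteration $k$. *)

theory Defs
  imports "HOL-Analysis.Analysis"
begin

definition is_walk :: "('v \<Rightarrow> 'v \<Rightarrow> bool) \<Rightarrow> 'v list \<Rightarrow> bool" where
  "is_walk E ps \<longleftrightarrow> ps \<noteq> [] \<and> (\<forall>k. Suc k < length ps \<longrightarrow> E (ps ! k) (ps ! Suc k))"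

definition is_path :: "('v \<Rightarrow> 'v \<Rightarrow> bool) \<Rightarrow> 'v \<Rightarrow> 'v \<Rightarrow> 'v list \<Rightarrow> bool" where
  "is_path E i j ps \<longleftrightarrow> is_walk E ps \<and> distinct ps \<and> hd ps = i \<and> last ps = j"

definition is_cycle :: "('v \<Rightarrow> 'v \<Rightarrow> bool) \<Rightarrow> 'v list \<Rightarrow> bool" where
  "is_cycle E cs \<longleftrightarrow> length cs \<ge> 3 \<and> is_walk E cs \<and> distinct cs \<and> E (last cs) (hd cs)"

definition is_tree :: "'v set \<Rightarrow> ('v \<Rightarrow> 'v \<Rightarrow> bool) \<Rightarrow> bool" where
  "is_tree V E \<longleftrightarrow> finite V \<and> V \<noteq> {}
     \<and> (\<forall>i j. E i j \<longrightarrow> i \<in> V \<and> j \<in> V)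
     \<and> (\<forall>i j. E i j \<longleftrightarrow> E j i)
     \<and> (\<forall>i. \<not> E i i)
     \<and> (\<forall>i\<in>V. \<forall>j\<in>V. \<exists>ps. is_path E i j ps)
     \<and> (\<nexists>cs. is_cycle E cs)"

definition ne :: "'v set \<Rightarrow> ('v \<Rightarrow> 'v \<Rightarrow> bool) \<Rightarrow> 'v \<Rightarrow> 'v set" where
  "ne V E i = {p \<in> V. E i p \<and> p \<noteq> i}"

definition tree_path :: "('v \<Rightarrow> 'v \<Rightarrow> bool) \<Rightarrow> 'v \<Rightarrow> 'v \<Rightarrow> 'v list" where
  "tree_path E i j = (THE ps. is_path E i j ps)"

definition tree_dist :: "('v \<Rightarrow> 'v \<Rightarrow> bool) \<Rightarrow> 'v \<Rightarrow> 'v \<Rightarrow> nat" where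
  "tree_dist E i j = length (tree_path E i j) - 1"

definition diameter :: "'v set \<Rightarrow> ('v \<Rightarrow> 'v \<Rightarrow> bool) \<Rightarrow> nat" where
  "diameter V E = Max {tree_dist E i j | i j. i \<in> V \<and> j \<in> V}"

text \<open>theta extended additively along the tree path (theta^{i,i} = 0: empty sum).\<close>
definition theta_path :: "('v \<Rightarrow> 'v \<Rightarrow> bool) \<Rightarrow> ('v \<Rightarrow> 'v \<Rightarrow> real^'d) \<Rightarrow> 'v \<Rightarrow> 'v \<Rightarrow> real^'d" where
  "theta_path E \<theta> i j =
     (let ps = tree_path E i j in \<Sum>k<length ps - 1. \<theta> (ps ! k) (ps ! Suc k))"

text \<open>Messages m_k^{i,j} (k \<ge> 1; the value at k = 0 is an unused convention).\<close>
fun msgM :: "'v set \<Rightarrow> ('v \<Rightarrow> 'v \<Rightarrow> bool) \<Rightarrow> ('v \<Rightarrow> real^'d^'d) \<Rightarrow> nat \<Rightarrow> 'v \<Rightarrow> 'v \<Rightarrow> real^'d^'d" where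
  "msgM V E F 0 i j = 0"
| "msgM V E F (Suc 0) i j = F i"
| "msgM V E F (Suc (Suc k)) i j = F i + (\<Sum>p\<in>ne V E i - {j}. msgM V E F (Suc k) p i)"

fun msgD :: "'v set \<Rightarrow> ('v \<Rightarrow> 'v \<Rightarrow> bool) \<Rightarrow> ('v \<Rightarrow> real^'d^'d) \<Rightarrow> ('v \<Rightarrow> 'v \<Rightarrow> real^'d)
             \<Rightarrow> nat \<Rightarrow> 'v \<Rightarrow> 'v \<Rightarrow> real^'d" where
  "msgD V E F \<theta> 0 i j = 0"
| "msgD V E F \<theta> (Suc 0) i j = F i *v \<theta> j i"
| "msgD V E F \<theta> (Suc (Suc k)) i j =
     msgM V E F (Suc (Suc k)) i j *v \<theta> j i + (\<Sum>p\<in>ne V E i - {j}. msgD V E F \<theta> (Suc k) p i)"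

end

theory Submission
  imports Defs
begin

text \<open>
  Removing a vertex r splits the tree into the branches hanging off its neighbours, the branch
  of a neighbour j being the set of vertices whose tree path from j avoids r. By induction on k,
  the message m_{k+1}^{i,j} is the sum of F over the vertices of the branch of i (away from j)
  within distance k of i, and the second message is the corresponding sum of F^v \<theta>^{j,v}, because
  \<theta>^{j,v} = \<theta>^{j,i} + \<theta>^{i,v} on that branch. Every vertex of a branch of r is within
  distance diameter - 1 of the neighbour, so for K at least the diameter the truncated branches are
  complete, and summing over the neighbours of r gives both identities.
\<close>

lemma is_walk_iff_successively: "is_walk E ps \<longleftrightarrow> ps \<noteq> [] \<and> successively E ps"
  by (simp add: is_walk_def successively_conv_nth)

lemma is_path_Cons_Cons_iff:
  "is_path E u v (x # w # ps) \<longleftrightarrow> x = u \<and> E u w \<and> u \<notin> set (w # ps) \<and> is_path E w v (w # ps)"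
  by (auto simp: is_path_def is_walk_iff_successively)

lemma is_path_singleton_iff: "is_path E u v [x] \<longleftrightarrow> x = u \<and> u = v"
  by (auto simp: is_path_def is_walk_iff_successively)

lemma is_path_Cons: "is_path E w v ps \<Longrightarrow> E u w \<Longrightarrow> u \<notin> set ps \<Longrightarrow> is_path E u v (u # ps)"
  by (cases ps) (auto simp: is_path_def is_walk_iff_successively)

lemma is_path_split:
  assumes "is_path E u v (as @ w # bs)"
  shows "is_path E u w (as @ [w])" and "is_path E w v (w # bs)"
  using assms by (auto simp: is_path_def is_walk_iff_successively successively_append_iff hd_append)

lemma is_path_Cons_eq_Nil_iff: "is_path E u v (u # ps) \<Longrightarrow> ps = [] \<longleftrightarrow> u = v"
  by (auto simp: is_path_def) (metis last_in_set)

lemma cycle_of_diverging_paths: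
  assumes sym: "\<And>i j. E i j \<longleftrightarrow> E j i"
    and p: "is_path E u v (u # w1 # ps)" and q: "is_path E u v (u # w2 # qs)" and "w1 \<noteq> w2"
  shows "\<exists>cs. is_cycle E cs"
proof -
  have "last (w1 # ps) = v" "last (w2 # qs) = v"
    using p q by (simp_all add: is_path_def)
  then have "v \<in> set (w1 # ps)" "v \<in> set (w2 # qs)"
    by (metis last_in_set list.discI)+
  \<comment> \<open>z is the first vertex after u on the first path that also lies on the second; the two
    segments from u to z close up into a cycle.\<close>
  then obtain as z bs where ps: "w1 # ps = as @ z # bs" and z: "z \<in> set (w2 # qs)"
    and as: "\<forall>y\<in>set as. y \<notin> set (w2 # qs)"
    using split_list_first_prop[of "w1 # ps" "\<lambda>y. y \<in> set (w2 # qs)"] by blast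
  obtain cs ds where qs: "w2 # qs = cs @ z # ds"
    using z by (meson split_list)
  have "as \<noteq> [] \<or> cs \<noteq> []"
    using ps qs \<open>w1 \<noteq> w2\<close> by (cases as; cases cs) auto
  then have len: "length (u # as @ z # rev cs) \<ge> 3"
    by (cases as; cases cs) auto
  have "successively E ((u # as @ [z]) @ bs)" "successively E ((u # cs @ [z]) @ ds)"
    using p q unfolding is_path_def is_walk_iff_successively ps qs by simp_all
  then have "successively E (u # as @ [z])" "successively E (cs @ [z])"
    by (auto simp: successively_append_iff successively_Cons hd_append)
  then have walk: "successively E (u # as @ z # rev cs)"
    using sym by (auto simp: successively_append_iff successively_Cons hd_append hd_rev)
  have "last (u # as @ z # rev cs) = w2"
    using qs by (cases cs) (auto simp: last_rev)
  then have closing: "E (last (u # as @ z # rev cs)) (hd (u # as @ z # rev cs))"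
    using q sym by (simp add: is_path_def is_walk_iff_successively)
  have "distinct (u # as @ z # rev cs)"
    using p q as unfolding is_path_def ps qs by auto
  then have "is_cycle E (u # as @ z # rev cs)"
    using len walk closing by (simp add: is_cycle_def is_walk_iff_successively)
  then show ?thesis by blast
qed

lemma is_path_unique:
  assumes sym: "\<And>i j. E i j \<longleftrightarrow> E j i" and acyclic: "\<nexists>cs. is_cycle E cs"
  shows "is_path E u v ps \<Longrightarrow> is_path E u v qs \<Longrightarrow> ps = qs"
proof (induction ps arbitrary: u qs)
  case Nil
  then show ?case by (simp add: is_path_def is_walk_def)
next
  case (Cons x ps)
  have "x = u"
    using Cons.prems(1) by (simp add: is_path_def)
  obtain qs' where qs: "qs = u # qs'"
    using Cons.prems(2) by (cases qs) (auto simp: is_path_def is_walk_def)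
  have p: "is_path E u v (u # ps)" and q: "is_path E u v (u # qs')"
    using Cons.prems \<open>x = u\<close> qs by simp_all
  show ?case
  proof (cases ps)
    case ps: Nil
    then have "qs' = []"
      using is_path_Cons_eq_Nil_iff[OF p] is_path_Cons_eq_Nil_iff[OF q] by simp
    then show ?thesis
      using ps \<open>x = u\<close> qs by simp
  next
    case ps: (Cons w1 ps')
    then obtain w2 qs'' where qs': "qs' = w2 # qs''"
      using is_path_Cons_eq_Nil_iff[OF p] is_path_Cons_eq_Nil_iff[OF q] by (cases qs') auto
    have "w1 = w2"
      using cycle_of_diverging_paths[of E, OF sym] acyclic p q ps qs' by blast
    moreover have "is_path E w1 v ps" "is_path E w2 v qs'"
      using p q ps qs' by (simp_all add: is_path_Cons_Cons_iff)
    ultimately show ?thesis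
      using Cons.IH \<open>x = u\<close> qs by blast
  qed
qed

lemma sum_insert_UN_disjoint:
  assumes "finite I" "\<And>i. i \<in> I \<Longrightarrow> finite (A i)" "x \<notin> (\<Union>i\<in>I. A i)" "disjoint_family_on A I"
  shows "sum g (insert x (\<Union>i\<in>I. A i)) = g x + (\<Sum>i\<in>I. sum g (A i))"
  using assms by (simp add: sum.UNION_disjoint_family)

lemma sum_matrix_vector_mult:
  "(\<Sum>v\<in>S. A v :: 'a::comm_semiring_1^'n^'m) *v x = (\<Sum>v\<in>S. A v *v x)"
  by (induction S rule: infinite_finite_induct) (auto simp: matrix_vector_mult_add_rdistrib)

locale tree_graph =
  fixes V :: "'v set" and E :: "'v \<Rightarrow> 'v \<Rightarrow> bool"
  assumes is_tree: "is_tree V E"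
begin

lemma finite_V: "finite V"
  and edge_in_V: "E i j \<Longrightarrow> i \<in> V \<and> j \<in> V"
  and edge_sym: "E i j \<longleftrightarrow> E j i"
  and edge_irrefl: "\<not> E i i"
  and connected: "i \<in> V \<Longrightarrow> j \<in> V \<Longrightarrow> \<exists>ps. is_path E i j ps"
  and acyclic: "\<nexists>cs. is_cycle E cs"
  using is_tree unfolding is_tree_def by auto

lemma mem_ne_iff: "p \<in> ne V E i \<longleftrightarrow> E i p"
  unfolding ne_def using edge_in_V edge_irrefl by auto

lemma finite_ne: "finite (ne V E i)"
  unfolding ne_def using finite_V by simp

lemma tree_path_eqI: "is_path E u v ps \<Longrightarrow> tree_path E u v = ps"
  unfolding tree_path_def using is_path_unique[OF edge_sym acyclic] by blast

lemma is_path_tree_path: "u \<in> V \<Longrightarrow> v \<in> V \<Longrightarrow> is_path E u v (tree_path E u v)"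
  using connected tree_path_eqI by metis

lemma tree_path_self: "tree_path E u u = [u]"
  by (rule tree_path_eqI) (simp add: is_path_singleton_iff)

lemma tree_path_edge: "E u v \<Longrightarrow> tree_path E u v = [u, v]"
  by (rule tree_path_eqI) (use edge_irrefl in \<open>auto simp: is_path_def is_walk_iff_successively\<close>)

lemma hd_tree_path: "u \<in> V \<Longrightarrow> v \<in> V \<Longrightarrow> tree_path E u v \<noteq> [] \<and> hd (tree_path E u v) = u"
  using is_path_tree_path by (simp add: is_path_def is_walk_def)

lemma tree_path_Cons:
  "E u w \<Longrightarrow> v \<in> V \<Longrightarrow> u \<notin> set (tree_path E w v) \<Longrightarrow> tree_path E u v = u # tree_path E w v"
  using tree_path_eqI is_path_Cons is_path_tree_path edge_in_V by metis

lemma tree_path_via_neighbour: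
  assumes "E u w" "v \<in> V" "w \<in> set (tree_path E u v)"
  shows "tree_path E u v = u # tree_path E w v"
proof -
  obtain as bs where split: "tree_path E u v = as @ w # bs"
    using assms(3) by (meson split_list)
  then have "is_path E u w (as @ [w])" "is_path E w v (w # bs)"
    using is_path_split is_path_tree_path assms edge_in_V by metis+
  then have "as @ [w] = [u, w]" "tree_path E w v = w # bs"
    using tree_path_eqI tree_path_edge[OF assms(1)] by metis+
  then show ?thesis
    using split by simp
qed

lemma tree_path_first_step:
  assumes "u \<in> V" "v \<in> V" "u \<noteq> v"
  obtains w where "E u w" "tree_path E u v = u # tree_path E w v"
proof -
  obtain ps where ps: "tree_path E u v = u # ps"
    using hd_tree_path[OF assms(1,2)] by (cases "tree_path E u v") auto
  then obtain w ps' where "ps = w # ps'"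
    using is_path_Cons_eq_Nil_iff is_path_tree_path assms by (metis list.exhaust)
  then have "E u w" "w \<in> set (tree_path E u v)"
    using is_path_tree_path[OF assms(1,2)] ps by (auto simp: is_path_def is_walk_iff_successively)
  then show ?thesis
    using that tree_path_via_neighbour assms(2) by blast
qed

definition branch :: "'v \<Rightarrow> 'v \<Rightarrow> 'v set" where
  "branch i j = {v \<in> V. j \<notin> set (tree_path E i v)}"

lemma branch_subset: "branch i j \<subseteq> V"
  unfolding branch_def by blast

lemma finite_branch: "finite (branch i j)"
  using finite_V branch_subset by (rule finite_subset[rotated])

lemma mem_branch_iff:
  assumes "E u p"
  shows "v \<in> branch p u \<longleftrightarrow> v \<in> V \<and> tree_path E u v = u # tree_path E p v"
proof
  assume "v \<in> branch p u"
  then show "v \<in> V \<and> tree_path E u v = u # tree_path E p v"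
    using assms by (simp add: branch_def tree_path_Cons)
next
  assume v: "v \<in> V \<and> tree_path E u v = u # tree_path E p v"
  then have "distinct (u # tree_path E p v)"
    using is_path_tree_path edge_in_V assms by (metis is_path_def)
  then show "v \<in> branch p u"
    using v by (simp add: branch_def)
qed

lemma branch_partition:
  assumes "u \<in> V"
  shows "V = insert u (\<Union>p\<in>ne V E u. branch p u)"
    and "u \<notin> (\<Union>p\<in>ne V E u. branch p u)"
    and "disjoint_family_on (\<lambda>p. branch p u) (ne V E u)"
proof -
  have "v \<in> (\<Union>p\<in>ne V E u. branch p u)" if v: "v \<in> V" "v \<noteq> u" for v
  proof -
    obtain w where "E u w" "tree_path E u v = u # tree_path E w v"
      using tree_path_first_step[OF assms v(1)] v(2) by metis
    then have "w \<in> ne V E u" "v \<in> branch w u"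
      using v(1) by (simp_all add: mem_ne_iff mem_branch_iff)
    then show ?thesis by blast
  qed
  then show "V = insert u (\<Union>p\<in>ne V E u. branch p u)"
    using assms branch_subset by blast
  have "u \<notin> branch p u" if "E u p" for p
    using that hd_tree_path[of p u] edge_in_V[OF that] by (auto simp: mem_branch_iff tree_path_self)
  then show "u \<notin> (\<Union>p\<in>ne V E u. branch p u)"
    by (simp add: mem_ne_iff)
  have "p = q" if "E u p" "E u q" "v \<in> branch p u" "v \<in> branch q u" for p q v
  proof -
    have "tree_path E p v = tree_path E q v" "v \<in> V"
      using that by (simp_all add: mem_branch_iff)
    then show "p = q"
      using hd_tree_path edge_in_V that(1,2) by metis
  qed
  then show "disjoint_family_on (\<lambda>p. branch p u) (ne V E u)"
    by (auto simp: disjoint_family_on_def mem_ne_iff)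
qed

lemma branch_decomposition:
  assumes "E i j"
  shows "branch i j = insert i (\<Union>p\<in>ne V E i - {j}. branch p i)"
proof
  have i: "i \<in> V" "j \<in> V"
    using assms edge_in_V by auto
  show "branch i j \<subseteq> insert i (\<Union>p\<in>ne V E i - {j}. branch p i)"
  proof
    fix v
    assume v: "v \<in> branch i j"
    show "v \<in> insert i (\<Union>p\<in>ne V E i - {j}. branch p i)"
    proof (cases "v = i")
      case False
      then obtain p where p: "p \<in> ne V E i" "v \<in> branch p i"
        using branch_partition(1)[OF i(1)] v branch_subset by blast
      have "j \<in> set (tree_path E i v)" if "p = j"
      proof -
        have "v \<in> V" "tree_path E i v = i # tree_path E j v"
          using p that by (simp_all add: mem_ne_iff mem_branch_iff)
        then show ?thesis
          using hd_tree_path[OF i(2)] by (metis hd_in_set list.set_intros(2))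
      qed
      then show ?thesis
        using p v by (auto simp: branch_def)
    qed simp
  qed
  show "insert i (\<Union>p\<in>ne V E i - {j}. branch p i) \<subseteq> branch i j"
  proof
    fix v
    assume "v \<in> insert i (\<Union>p\<in>ne V E i - {j}. branch p i)"
    then consider "v = i" | p where "p \<in> ne V E i" "p \<noteq> j" "v \<in> branch p i"
      by blast
    then show "v \<in> branch i j"
    proof cases
      case 1
      then show ?thesis
        using i assms edge_irrefl by (auto simp: branch_def tree_path_self)
    next
      case 2
      then have v: "v \<in> V" "tree_path E i v = i # tree_path E p v"
        by (simp_all add: mem_ne_iff mem_branch_iff)
      have "j \<notin> set (tree_path E i v)"
      proof
        assume "j \<in> set (tree_path E i v)"
        then have "tree_path E p v = tree_path E j v"
          using tree_path_via_neighbour[OF assms v(1)] v(2) by simp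
        then show False
          using hd_tree_path[OF _ v(1)] edge_in_V mem_ne_iff 2(1,2) i(2) by metis
      qed
      then show ?thesis
        using v by (simp add: branch_def)
    qed
  qed
qed

lemma self_mem_branch: "E i j \<Longrightarrow> i \<in> branch i j"
  using branch_decomposition by blast

lemma tree_dist_self: "tree_dist E u u = 0"
  by (simp add: tree_dist_def tree_path_self)

lemma tree_dist_branch:
  assumes "E i p" "v \<in> branch p i"
  shows "tree_dist E i v = Suc (tree_dist E p v)"
proof -
  have "v \<in> V" "tree_path E i v = i # tree_path E p v"
    using assms by (simp_all add: mem_branch_iff)
  moreover have "tree_path E p v \<noteq> []"
    using hd_tree_path edge_in_V assms(1) calculation(1) by blast
  ultimately show ?thesis
    by (simp add: tree_dist_def)
qed

lemma tree_dist_le_diameter: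
  assumes "u \<in> V" "v \<in> V"
  shows "tree_dist E u v \<le> diameter V E"
proof -
  have "{tree_dist E i j | i j. i \<in> V \<and> j \<in> V} = (\<lambda>(i, j). tree_dist E i j) ` (V \<times> V)"
    by auto
  then have "finite {tree_dist E i j | i j. i \<in> V \<and> j \<in> V}"
    using finite_V by simp
  then show ?thesis
    unfolding diameter_def using assms by (intro Max_ge) auto
qed

lemma theta_path_self: "theta_path E \<theta> u u = 0"
  by (simp add: theta_path_def tree_path_self)

lemma theta_path_branch:
  assumes "E j i" "v \<in> branch i j"
  shows "theta_path E \<theta> j v = \<theta> j i + theta_path E \<theta> i v"
proof -
  have "v \<in> V" "tree_path E j v = j # tree_path E i v"
    using assms by (simp_all add: mem_branch_iff)
  moreover obtain ps where ps: "tree_path E i v = i # ps"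
    using hd_tree_path edge_in_V assms(1) calculation(1) by (metis list.collapse)
  ultimately show ?thesis
    by (simp add: theta_path_def sum.lessThan_Suc_shift del: sum.lessThan_Suc)
qed

lemma sum_over_branches:
  assumes "r \<in> V"
  shows "(\<Sum>v\<in>V. g v) = g r + (\<Sum>j\<in>ne V E r. \<Sum>v\<in>branch j r. g v)"
proof -
  have "(\<Sum>v\<in>V. g v) = sum g (insert r (\<Union>j\<in>ne V E r. branch j r))"
    using branch_partition(1)[OF assms] by (rule arg_cong)
  also have "\<dots> = g r + (\<Sum>j\<in>ne V E r. \<Sum>v\<in>branch j r. g v)"
    using branch_partition(2,3)[OF assms] finite_ne finite_branch
    by (intro sum_insert_UN_disjoint)
  finally show ?thesis .
qed

lemma sum_branch_within:
  assumes "E i j"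
  shows "(\<Sum>v\<in>{v \<in> branch i j. tree_dist E i v \<le> n}. g v)
       = g i + (\<Sum>p\<in>ne V E i - {j}. \<Sum>v\<in>{v \<in> branch p i. Suc (tree_dist E p v) \<le> n}. g v)"
proof -
  have i: "i \<in> V"
    using assms edge_in_V by blast
  have decomp: "{v \<in> branch i j. tree_dist E i v \<le> n}
      = insert i (\<Union>p\<in>ne V E i - {j}. {v \<in> branch p i. Suc (tree_dist E p v) \<le> n})"
    using branch_decomposition[OF assms] tree_dist_branch tree_dist_self
    by (auto simp: mem_ne_iff)
  show ?thesis
    unfolding decomp
  proof (rule sum_insert_UN_disjoint)
    show "disjoint_family_on (\<lambda>p. {v \<in> branch p i. Suc (tree_dist E p v) \<le> n}) (ne V E i - {j})"
      using branch_partition(3)[OF i] by (auto simp: disjoint_family_on_def)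
    show "i \<notin> (\<Union>p\<in>ne V E i - {j}. {v \<in> branch p i. Suc (tree_dist E p v) \<le> n})"
      using branch_partition(2)[OF i] by blast
  qed (simp_all add: finite_ne finite_branch)
qed

lemma msgM_eq_sum:
  "E i j \<Longrightarrow> msgM V E F (Suc n) i j = (\<Sum>v\<in>{v \<in> branch i j. tree_dist E i v \<le> n}. F v)"
proof (induction n arbitrary: i j)
  case 0
  then show ?case
    using sum_branch_within[OF 0, where n=0 and g=F] by simp
next
  case (Suc n)
  have "msgM V E F (Suc (Suc n)) i j
      = F i + (\<Sum>p\<in>ne V E i - {j}. \<Sum>v\<in>{v \<in> branch p i. tree_dist E p v \<le> n}. F v)"
    using Suc.IH by (simp add: mem_ne_iff edge_sym)
  then show ?case
    using sum_branch_within[OF Suc.prems, where n="Suc n" and g=F] by simp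
qed

lemma msgD_eq_sum:
  "E i j \<Longrightarrow> msgD V E F \<theta> (Suc n) i j
     = (\<Sum>v\<in>{v \<in> branch i j. tree_dist E i v \<le> n}. F v *v theta_path E \<theta> j v)"
proof (induction n arbitrary: i j)
  case 0
  have "theta_path E \<theta> j i = \<theta> j i"
    using theta_path_branch[OF edge_sym[THEN iffD1, OF 0] self_mem_branch[OF 0]]
    by (simp add: theta_path_self)
  then show ?case
    using sum_branch_within[OF 0, where n=0 and g="\<lambda>v. F v *v theta_path E \<theta> j v"] by simp
next
  case (Suc n)
  let ?S = "{v \<in> branch i j. tree_dist E i v \<le> Suc n}"
  have "(\<Sum>p\<in>ne V E i - {j}. msgD V E F \<theta> (Suc n) p i)
      = (\<Sum>p\<in>ne V E i - {j}. \<Sum>v\<in>{v \<in> branch p i. tree_dist E p v \<le> n}. F v *v theta_path E \<theta> i v)"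
    using Suc.IH by (simp add: mem_ne_iff edge_sym)
  also have "\<dots> = (\<Sum>v\<in>?S. F v *v theta_path E \<theta> i v)"
    using sum_branch_within[OF Suc.prems, where n="Suc n" and g="\<lambda>v. F v *v theta_path E \<theta> i v"]
    by (simp add: theta_path_self)
  moreover have "msgM V E F (Suc (Suc n)) i j *v \<theta> j i = (\<Sum>v\<in>?S. F v *v \<theta> j i)"
    by (simp only: msgM_eq_sum[OF Suc.prems] sum_matrix_vector_mult)
  ultimately have "msgD V E F \<theta> (Suc (Suc n)) i j
      = (\<Sum>v\<in>?S. F v *v \<theta> j i + F v *v theta_path E \<theta> i v)"
    by (simp only: msgD.simps sum.distrib)
  also have "\<dots> = (\<Sum>v\<in>?S. F v *v theta_path E \<theta> j v)"
    using theta_path_branch[OF edge_sym[THEN iffD1, OF Suc.prems], where \<theta>=\<theta>]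
    by (intro sum.cong) (simp_all add: matrix_vector_right_distrib)
  finally show ?case .
qed

lemma branch_within_diameter:
  assumes "E r j" "diameter V E \<le> Suc n"
  shows "{v \<in> branch j r. tree_dist E j v \<le> n} = branch j r"
  using tree_dist_branch[OF assms(1)] tree_dist_le_diameter edge_in_V assms branch_subset
  by fastforce

lemma messages_eq_sum_branch:
  assumes "E j r" "diameter V E \<le> K"
  shows "msgM V E F K j r = (\<Sum>v\<in>branch j r. F v)"
    and "msgD V E F \<theta> K j r = (\<Sum>v\<in>branch j r. F v *v theta_path E \<theta> r v)"
proof -
  have "E r j"
    using assms(1) edge_sym by blast
  then have "1 \<le> K"
    using tree_dist_le_diameter[of r j] edge_in_V assms(2)
    by (simp add: tree_dist_def tree_path_edge)
  then have K: "K = Suc (K - 1)" and "diameter V E \<le> Suc (K - 1)"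
    using assms(2) by simp_all
  then have "{v \<in> branch j r. tree_dist E j v \<le> K - 1} = branch j r"
    using branch_within_diameter[OF \<open>E r j\<close>] by blast
  then show "msgM V E F K j r = (\<Sum>v\<in>branch j r. F v)"
    and "msgD V E F \<theta> K j r = (\<Sum>v\<in>branch j r. F v *v theta_path E \<theta> r v)"
    using msgM_eq_sum[OF assms(1), of F "K - 1"] msgD_eq_sum[OF assms(1), of F \<theta> "K - 1"] K
    by simp_all
qed

end

theorem lemma1:
  fixes V :: "'v set" and E :: "'v \<Rightarrow> 'v \<Rightarrow> bool"
    and F :: "'v \<Rightarrow> real^'d^'d" and \<theta> :: "'v \<Rightarrow> 'v \<Rightarrow> real^'d" and K :: nat
  assumes "is_tree V E"
    and "K \<ge> diameter V E"
    and "r \<in> V"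
  shows "(\<Sum>v\<in>V. F v) = F r + (\<Sum>j\<in>ne V E r. msgM V E F K j r)
       \<and> (\<Sum>v\<in>V. F v *v theta_path E \<theta> r v) = (\<Sum>j\<in>ne V E r. msgD V E F \<theta> K j r)"
proof -
  interpret tree_graph V E
    using assms(1) by unfold_locales
  have "j \<in> ne V E r \<Longrightarrow> E j r" for j
    using edge_sym by (simp add: mem_ne_iff)
  then show ?thesis
    using sum_over_branches[OF assms(3), of F]
      sum_over_branches[OF assms(3), of "\<lambda>v. F v *v theta_path E \<theta> r v"]
      messages_eq_sum_branch(1)[OF _ assms(2), where F=F]
      messages_eq_sum_branch(2)[OF _ assms(2), where F=F and \<theta>=\<theta>]
    by (simp add: theta_path_self)
qed

end
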